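(* Let $V$ be a finite-dimensional vector space over $\mathbb{F}_q$. A metric $d$ on $V$ is a projective metric if and only if it is integral, (integrally) convex, scale-invariant and translation-invariant.
   Context: For a set $\mathcal{F}\subset V$ of pairwise linearly independent (in particular nonzero) vectors, the projective weight is $\operatorname{wt}_{\mathcal{F}}(x)=\min(\{|I|: I\subseteq\mathcal{F},\ x\in\langle I\rangle\}\cup\{\infty\})$ (with $\langle\emptyset\rangle=\{0\}$), and $d_{\mathcal{F}}(x,y)=\operatorname{wt}_{\mathcal{F}}(y-x)$; a metric is projective if it equals $d_{\mathcal{F}}$ for some such $\mathcal{F}$. A metric $d:V\times V\to\mathbb{R}\cup\{\infty\}$ is integral if it takes values in $\mathbb{N}\cup\{\infty\}$; scale-invariant if $d(\alpha x,\alpha y)=d(x,y)$ for all nonzero $\alpha\in\mathbb{F}_q$; translation-invariant if $d(x+z,y+z)=d(x,y)$. An integral metric is convex if for all $v_1,v_2$ with $d(v_1,v_2)<\infty$ and all $i\in\{0,\dots,d(v_1,v_2)\}$ there is $x\in V$ with $d(v_1,x)=i$ and $d(x,v_2)=d(v_1,v_2)-i$. *)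

theory Defs
  imports Main "HOL-Library.Extended_Real"
begin

text \<open>A vector space V over a field is given by a scalar multiplication
  scale satisfying the library locale vector_space; V is the type 'v.\<close>

definition is_metric :: "('v \<Rightarrow> 'v \<Rightarrow> ereal) \<Rightarrow> bool" where
  "is_metric d \<longleftrightarrow>
     (\<forall>x y. 0 \<le> d x y) \<and>
     (\<forall>x y. d x y = 0 \<longleftrightarrow> x = y) \<and>
     (\<forall>x y. d x y = d y x) \<and>
     (\<forall>x y z. d x z \<le> d x y + d y z)"

definition pairwise_lin_indep :: "('a::field \<Rightarrow> 'v::ab_group_add \<Rightarrow> 'v) \<Rightarrow> 'v set \<Rightarrow> bool" where
  "pairwise_lin_indep scale F \<longleftrightarrow>
     (\<forall>u\<in>F. u \<noteq> 0) \<and>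
     (\<forall>u\<in>F. \<forall>w\<in>F. u \<noteq> w \<longrightarrow> \<not> module.dependent scale {u, w})"

text \<open>Projective weight: min of card I over I subset of F with x in span I,
  together with infinity (Inf of the empty set of ereals is infinity).\<close>
definition proj_wt :: "('a::field \<Rightarrow> 'v::ab_group_add \<Rightarrow> 'v) \<Rightarrow> 'v set \<Rightarrow> 'v \<Rightarrow> ereal" where
  "proj_wt scale F x =
     Inf ((\<lambda>I. ereal (real (card I))) ` {I. I \<subseteq> F \<and> finite I \<and> x \<in> module.span scale I})"

definition proj_dist :: "('a::field \<Rightarrow> 'v::ab_group_add \<Rightarrow> 'v) \<Rightarrow> 'v set \<Rightarrow> 'v \<Rightarrow> 'v \<Rightarrow> ereal" where
  "proj_dist scale F x y = proj_wt scale F (y - x)"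

definition projective_metric :: "('a::field \<Rightarrow> 'v::ab_group_add \<Rightarrow> 'v) \<Rightarrow> ('v \<Rightarrow> 'v \<Rightarrow> ereal) \<Rightarrow> bool" where
  "projective_metric scale d \<longleftrightarrow>
     (\<exists>F. pairwise_lin_indep scale F \<and> d = proj_dist scale F)"

definition integral_metric :: "('v \<Rightarrow> 'v \<Rightarrow> ereal) \<Rightarrow> bool" where
  "integral_metric d \<longleftrightarrow> (\<forall>x y. d x y = \<infinity> \<or> (\<exists>n::nat. d x y = ereal (real n)))"

definition scale_invariant :: "('a::field \<Rightarrow> 'v \<Rightarrow> 'v) \<Rightarrow> ('v \<Rightarrow> 'v \<Rightarrow> ereal) \<Rightarrow> bool" where
  "scale_invariant scale d \<longleftrightarrow> (\<forall>\<alpha> x y. \<alpha> \<noteq> 0 \<longrightarrow> d (scale \<alpha> x) (scale \<alpha> y) = d x y)"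

definition translation_invariant :: "('v::plus \<Rightarrow> 'v \<Rightarrow> ereal) \<Rightarrow> bool" where
  "translation_invariant d \<longleftrightarrow> (\<forall>x y z. d (x + z) (y + z) = d x y)"

definition convex_metric :: "('v \<Rightarrow> 'v \<Rightarrow> ereal) \<Rightarrow> bool" where
  "convex_metric d \<longleftrightarrow>
     (\<forall>v1 v2 (n::nat). d v1 v2 = ereal (real n) \<longrightarrow>
        (\<forall>i\<le>n. \<exists>x. d v1 x = ereal (real i) \<and> d x v2 = ereal (real (n - i))))"

end

theory Submission
  imports Defs
begin

text \<open>A projective metric is translation and scale invariant because spans are, integral
  because the infimum defining the weight is attained, and convex because a minimal set I
  spanning y - x can be split into parts of sizes i and |I| - i, which splits y - x.
  Conversely, for an invariant metric d the weight x \<mapsto> d 0 x is subadditive, so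
  d 0 x \<le> |I| whenever x lies in the span of a set I of unit vectors; and convexity peels
  off one unit step at a time, so a vector of weight n is spanned by n unit vectors. Hence
  d 0 is the projective weight of the unit sphere, and equally of any set of representatives
  of the lines through it, which is pairwise linearly independent.\<close>

lemma translation_invariant_dist_eq:
  fixes d :: "'v::ab_group_add \<Rightarrow> 'v \<Rightarrow> ereal"
  assumes "translation_invariant d"
  shows "d x y = d 0 (y - x)"
proof -
  have "d (x + - x) (y + - x) = d x y"
    using assms unfolding translation_invariant_def by blast
  then show ?thesis by simp
qed

lemma is_metric_dist_self: "is_metric d \<Longrightarrow> d x x = 0"
  unfolding is_metric_def by blast

lemma ereal_add_le_squeeze:
  fixes a b :: ereal and x y :: real
  assumes "0 \<le> a" "0 \<le> b" "a \<le> ereal x" "b \<le> ereal y" "ereal (x + y) \<le> a + b"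
  shows "a = ereal x" "b = ereal y"
  using assms by (cases a; cases b; auto)+

context vector_space
begin

lemma proj_wt_le_card:
  "I \<subseteq> F \<Longrightarrow> finite I \<Longrightarrow> x \<in> span I \<Longrightarrow> proj_wt scale F x \<le> ereal (real (card I))"
  unfolding proj_wt_def by (rule Inf_lower) auto

lemma proj_wt_greatest:
  "(\<And>I. I \<subseteq> F \<Longrightarrow> finite I \<Longrightarrow> x \<in> span I \<Longrightarrow> a \<le> ereal (real (card I)))
    \<Longrightarrow> a \<le> proj_wt scale F x"
  unfolding proj_wt_def by (rule Inf_greatest) auto

lemma proj_wt_nonneg: "0 \<le> proj_wt scale F x"
  by (rule proj_wt_greatest) simp

lemma proj_wt_cases:
  obtains "proj_wt scale F x = \<infinity>"
  | I where "I \<subseteq> F" "finite I" "x \<in> span I" "proj_wt scale F x = ereal (real (card I))"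
proof (cases "\<exists>I. I \<subseteq> F \<and> finite I \<and> x \<in> span I")
  case False
  then have no_span: "{I. I \<subseteq> F \<and> finite I \<and> x \<in> span I} = {}" by blast
  have "proj_wt scale F x = \<infinity>"
    unfolding proj_wt_def no_span by (simp add: top_ereal_def)
  then show ?thesis using that(1) by blast
next
  case True
  define n where "n = (LEAST n. \<exists>I. I \<subseteq> F \<and> finite I \<and> x \<in> span I \<and> card I = n)"
  have "\<exists>I. I \<subseteq> F \<and> finite I \<and> x \<in> span I \<and> card I = n"
    unfolding n_def by (rule LeastI_ex) (use True in auto)
  then obtain I where I: "I \<subseteq> F" "finite I" "x \<in> span I" "card I = n" by blast
  have "ereal (real (card I)) \<le> proj_wt scale F x"
  proof (rule proj_wt_greatest)
    fix J assume "J \<subseteq> F" "finite J" "x \<in> span J"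
    then have "n \<le> card J" unfolding n_def by (intro Least_le) auto
    then show "ereal (real (card I)) \<le> ereal (real (card J))" using I by simp
  qed
  with proj_wt_le_card[OF I(1-3)] have "proj_wt scale F x = ereal (real (card I))" by simp
  then show ?thesis using that(2) I by blast
qed

lemma proj_wt_scale: "c \<noteq> 0 \<Longrightarrow> proj_wt scale F (scale c x) = proj_wt scale F x"
proof -
  have le: "proj_wt scale F (scale c x) \<le> proj_wt scale F x" for c x
    unfolding proj_wt_def by (rule Inf_superset_mono) (auto intro: span_scale)
  assume "c \<noteq> 0"
  then show ?thesis using le[of c x] le[of "inverse c" "scale c x"] by simp
qed

lemma proj_wt_add_le: "proj_wt scale F (x + y) \<le> proj_wt scale F x + proj_wt scale F y"
proof (cases rule: proj_wt_cases[of F x])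
  case 1
  then show ?thesis using proj_wt_nonneg[of F y] by simp
next
  case I: (2 I)
  show ?thesis
  proof (cases rule: proj_wt_cases[of F y])
    case 1
    then show ?thesis using proj_wt_nonneg[of F x] by simp
  next
    case J: (2 J)
    have "x + y \<in> span (I \<union> J)"
      using I(3) J(3) by (auto simp: span_Un)
    then have "proj_wt scale F (x + y) \<le> ereal (real (card (I \<union> J)))"
      using I J by (intro proj_wt_le_card) auto
    also have "\<dots> \<le> ereal (real (card I + card J))"
      using card_Un_le[of I J] by (simp only: ereal_less_eq of_nat_le_iff)
    finally show ?thesis using I(4) J(4) by simp
  qed
qed

lemma proj_wt_eq_if_representatives:
  assumes "F \<subseteq> G" and rep: "\<And>g. g \<in> G \<Longrightarrow> \<exists>f\<in>F. g \<in> span {f}"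
  shows "proj_wt scale F = proj_wt scale G"
proof
  fix x
  show "proj_wt scale F x = proj_wt scale G x"
  proof (rule antisym)
    show "proj_wt scale G x \<le> proj_wt scale F x"
      unfolding proj_wt_def using \<open>F \<subseteq> G\<close> by (intro Inf_superset_mono) auto
    show "proj_wt scale F x \<le> proj_wt scale G x"
    proof (rule proj_wt_greatest)
      fix I assume I: "I \<subseteq> G" "finite I" "x \<in> span I"
      obtain r where r: "\<forall>g\<in>I. r g \<in> F \<and> g \<in> span {r g}"
        using bchoice[of I "\<lambda>g f. f \<in> F \<and> g \<in> span {f}"] rep I(1) by blast
      have "I \<subseteq> span (r ` I)"
        using r span_mono[of "{r _}" "r ` I"] by blast
      then have "x \<in> span (r ` I)"
        using I(3) span_mono span_span by blast
      then have "proj_wt scale F x \<le> ereal (real (card (r ` I)))"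
        using r I(2) by (intro proj_wt_le_card) auto
      also have "\<dots> \<le> ereal (real (card I))"
        using card_image_le[OF I(2)] by simp
      finally show "proj_wt scale F x \<le> ereal (real (card I))" .
    qed
  qed
qed

lemma translation_invariant_proj_dist: "translation_invariant (proj_dist scale F)"
  unfolding translation_invariant_def proj_dist_def by simp

lemma scale_invariant_proj_dist: "scale_invariant scale (proj_dist scale F)"
  unfolding scale_invariant_def proj_dist_def
  by (auto simp: scale_right_diff_distrib[symmetric] proj_wt_scale)

lemma integral_metric_proj_dist: "integral_metric (proj_dist scale F)"
  unfolding integral_metric_def proj_dist_def by (metis proj_wt_cases)

lemma convex_metric_proj_dist: "convex_metric (proj_dist scale F)"
  unfolding convex_metric_def
proof (intro allI impI)
  fix v1 v2 n i
  assume n: "proj_dist scale F v1 v2 = ereal (real n)" and "i \<le> n"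
  then obtain I where I: "I \<subseteq> F" "finite I" "v2 - v1 \<in> span I" "card I = n"
    unfolding proj_dist_def by (cases rule: proj_wt_cases[of F "v2 - v1"]) auto
  obtain J where J: "J \<subseteq> I" "card J = i"
    using \<open>i \<le> n\<close> I(4) by (metis obtain_subset_with_card_n)
  have "I = J \<union> (I - J)" using J(1) by blast
  then obtain a b where ab: "a \<in> span J" "b \<in> span (I - J)" "v2 - v1 = a + b"
    using I(3) span_Un[of J "I - J"] by auto
  define z where "z = v1 + a"
  have "proj_dist scale F v1 z \<le> ereal (real (card J))"
    unfolding proj_dist_def z_def using ab(1) I(1,2) J(1)
    by (intro proj_wt_le_card) (auto intro: finite_subset)
  then have upper1: "proj_dist scale F v1 z \<le> ereal (real i)"
    using J(2) by simp
  have "proj_dist scale F z v2 \<le> ereal (real (card (I - J)))"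
    unfolding proj_dist_def z_def using ab I(1,2)
    by (intro proj_wt_le_card) (auto simp: algebra_simps)
  then have upper2: "proj_dist scale F z v2 \<le> ereal (real (n - i))"
    using J I(2,4) by (simp add: card_Diff_subset finite_subset)
  have "ereal (real i + real (n - i)) = proj_wt scale F ((z - v1) + (v2 - z))"
    using n \<open>i \<le> n\<close> unfolding proj_dist_def by simp
  also have "\<dots> \<le> proj_dist scale F v1 z + proj_dist scale F z v2"
    unfolding proj_dist_def by (rule proj_wt_add_le)
  finally have "ereal (real i + real (n - i)) \<le> proj_dist scale F v1 z + proj_dist scale F z v2" .
  with upper1 upper2 ereal_add_le_squeeze show
    "\<exists>x. proj_dist scale F v1 x = ereal (real i) \<and> proj_dist scale F x v2 = ereal (real (n - i))"
    unfolding proj_dist_def by (metis proj_wt_nonneg)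
qed

lemma independent_pair_if_distinct_lines:
  assumes "u \<noteq> 0" "w \<noteq> 0" "span {u} \<noteq> span {w}"
  shows "\<not> dependent {u, w}"
proof
  assume "dependent {u, w}"
  moreover have "u \<noteq> w" using assms(3) by blast
  ultimately have "u \<in> span {w}"
    using assms(2) independent_insertI[of u "{w}"] by auto
  with assms(1) have "w \<in> span {u}"
    using in_span_insert[of u w "{}"] by simp
  with \<open>u \<in> span {w}\<close> have "span {u} = span {w}"
    by (simp add: span_eq)
  with assms(3) show False ..
qed

lemma obtain_line_representatives:
  assumes "0 \<notin> G"
  obtains F where "F \<subseteq> G" "pairwise_lin_indep scale F" "\<And>g. g \<in> G \<Longrightarrow> \<exists>f\<in>F. g \<in> span {f}"
proof
  define rep where "rep L = (SOME f. f \<in> G \<and> span {f} = L)" for L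
  have rep: "rep (span {g}) \<in> G \<and> span {rep (span {g})} = span {g}" if "g \<in> G" for g
    unfolding rep_def by (rule someI[of "\<lambda>f. f \<in> G \<and> span {f} = span {g}" g]) (simp add: that)
  define F where "F = (\<lambda>g. rep (span {g})) ` G"
  show "F \<subseteq> G" unfolding F_def using rep by blast
  show "\<exists>f\<in>F. g \<in> span {f}" if "g \<in> G" for g
    unfolding F_def using rep[OF that] that by (auto intro: span_base)
  have "\<not> dependent {u, w}" if "u \<in> F" "w \<in> F" "u \<noteq> w" for u w
  proof (rule independent_pair_if_distinct_lines)
    show "u \<noteq> 0" "w \<noteq> 0" using that(1,2) \<open>F \<subseteq> G\<close> assms by auto
    show "span {u} \<noteq> span {w}" using that unfolding F_def by (auto simp: rep)
  qed
  with \<open>F \<subseteq> G\<close> assms show "pairwise_lin_indep scale F"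
    unfolding pairwise_lin_indep_def by auto
qed

lemma weight_le_card_of_span:
  assumes "is_metric d" "translation_invariant d" "scale_invariant scale d"
    and "finite I" "\<And>f. f \<in> I \<Longrightarrow> d 0 f \<le> 1" "x \<in> span I"
  shows "d 0 x \<le> ereal (real (card I))"
  using assms(4-6)
proof (induction I arbitrary: x rule: finite_induct)
  case empty
  then show ?case using is_metric_dist_self[OF assms(1)] by simp
next
  case (insert f I)
  obtain k where k: "x - scale k f \<in> span I"
    using insert.prems(2) by (auto simp: span_breakdown_eq)
  have unit: "d 0 (scale k f) \<le> 1"
  proof (cases "k = 0")
    case True
    then show ?thesis using is_metric_dist_self[OF assms(1)] by simp
  next
    case False
    then have "d 0 (scale k f) = d 0 f"
      using assms(3) unfolding scale_invariant_def by (metis scale_zero_right)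
    then show ?thesis using insert.prems(1) by simp
  qed
  have "d 0 x \<le> d 0 (scale k f) + d (scale k f) x"
    using assms(1) unfolding is_metric_def by blast
  also have "\<dots> = d 0 (scale k f) + d 0 (x - scale k f)"
    using translation_invariant_dist_eq[OF assms(2)] by simp
  also have "\<dots> \<le> 1 + ereal (real (card I))"
    using unit insert.IH[OF _ k] insert.prems(1) by (intro add_mono) auto
  finally show ?case using insert.hyps by (simp add: one_ereal_def)
qed

lemma convex_weight_spanned_by_units:
  assumes "is_metric d" "translation_invariant d" "convex_metric d"
  shows "d 0 x = ereal (real n) \<Longrightarrow>
    \<exists>I. I \<subseteq> {u. d 0 u = 1} \<and> finite I \<and> card I \<le> n \<and> x \<in> span I"
proof (induction n arbitrary: x)
  case 0
  then have "x = 0" using assms(1) unfolding is_metric_def by (metis of_nat_0 zero_ereal_def)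
  then show ?case by (intro exI[of _ "{}"]) auto
next
  case (Suc m)
  obtain y where y: "d 0 y = ereal (real m)" "d y x = ereal (real (Suc m - m))"
    using assms(3) Suc.prems unfolding convex_metric_def by (meson le_SucI order_refl)
  obtain I where I: "I \<subseteq> {u. d 0 u = 1}" "finite I" "card I \<le> m" "y \<in> span I"
    using Suc.IH[OF y(1)] by blast
  have "d 0 (x - y) = 1"
    using y(2) translation_invariant_dist_eq[OF assms(2), of y x] by (simp add: one_ereal_def)
  then have "insert (x - y) I \<subseteq> {u. d 0 u = 1}" using I(1) by blast
  moreover have "x \<in> span (insert (x - y) I)"
    unfolding span_breakdown_eq using I(4) by (intro exI[of _ 1]) simp
  moreover have "card (insert (x - y) I) \<le> Suc m"
    using I(2,3) card_insert_le_m1[of "Suc m" I "x - y"] by simp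
  ultimately show ?case using I(2) by blast
qed

lemma weight_eq_proj_wt_unit_sphere:
  assumes "is_metric d" "integral_metric d" "convex_metric d"
    and "scale_invariant scale d" "translation_invariant d"
  shows "d 0 x = proj_wt scale {u. d 0 u = 1} x"
proof (rule antisym)
  show "d 0 x \<le> proj_wt scale {u. d 0 u = 1} x"
    by (intro proj_wt_greatest weight_le_card_of_span[OF assms(1,5,4)]) auto
  show "proj_wt scale {u. d 0 u = 1} x \<le> d 0 x"
  proof (cases "d 0 x = \<infinity>")
    case False
    then obtain n where n: "d 0 x = ereal (real n)"
      using assms(2) unfolding integral_metric_def by blast
    then obtain I where I: "I \<subseteq> {u. d 0 u = 1}" "finite I" "card I \<le> n" "x \<in> span I"
      using convex_weight_spanned_by_units[OF assms(1,5,3)] by blast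
    then have "proj_wt scale {u. d 0 u = 1} x \<le> ereal (real (card I))"
      by (intro proj_wt_le_card)
    also have "\<dots> \<le> d 0 x"
      using n I(3) by simp
    finally show ?thesis .
  qed simp
qed

lemma projective_metric_if_invariant:
  assumes "is_metric d" "integral_metric d" "convex_metric d"
    and "scale_invariant scale d" "translation_invariant d"
  shows "projective_metric scale d"
proof -
  let ?G = "{u. d 0 u = 1}"
  have "0 \<notin> ?G" using is_metric_dist_self[OF assms(1)] by simp
  obtain F where F: "F \<subseteq> ?G" "pairwise_lin_indep scale F"
    "\<And>g. g \<in> ?G \<Longrightarrow> \<exists>f\<in>F. g \<in> span {f}"
    using obtain_line_representatives[OF \<open>0 \<notin> ?G\<close>] by blast
  have "d x y = proj_dist scale F x y" for x y
  proof -
    have "d x y = d 0 (y - x)"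
      using assms(5) by (rule translation_invariant_dist_eq)
    also have "\<dots> = proj_wt scale ?G (y - x)"
      using assms by (rule weight_eq_proj_wt_unit_sphere)
    also have "\<dots> = proj_wt scale F (y - x)"
      using proj_wt_eq_if_representatives[OF F(1,3)] by simp
    finally show ?thesis unfolding proj_dist_def .
  qed
  then show ?thesis using F(2) unfolding projective_metric_def by blast
qed

end

theorem proposition3p2:
  fixes scale :: "'a::{field,finite} \<Rightarrow> 'v::ab_group_add \<Rightarrow> 'v"
    and d :: "'v \<Rightarrow> 'v \<Rightarrow> ereal"
  assumes "vector_space scale"
    and "\<exists>B. finite_dimensional_vector_space scale B"
    and "is_metric d"
  shows "projective_metric scale d \<longleftrightarrow>
           integral_metric d \<and> convex_metric d \<and> scale_invariant scale d \<and> translation_invariant d"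
proof
  assume "projective_metric scale d"
  then obtain F where "d = proj_dist scale F" unfolding projective_metric_def by blast
  then show "integral_metric d \<and> convex_metric d \<and> scale_invariant scale d \<and> translation_invariant d"
    using vector_space.integral_metric_proj_dist[OF assms(1)]
      vector_space.convex_metric_proj_dist[OF assms(1)]
      vector_space.scale_invariant_proj_dist[OF assms(1)]
      vector_space.translation_invariant_proj_dist[OF assms(1)]
    by simp
next
  assume "integral_metric d \<and> convex_metric d \<and> scale_invariant scale d \<and> translation_invariant d"
  then show "projective_metric scale d"
    using vector_space.projective_metric_if_invariant[OF assms(1,3)] by blast
qed

end
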